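(* For any $\delta>0$ and any integer $s\in\{0,1,\dots,n\}$ with $s>8\log\frac{4}{\delta}$, the algorithm $C_s$ is $(\varepsilon,\frac{1}{2}\delta)$-differentially private for \[ \varepsilon=\sqrt{\frac{32\log\frac{4}{\delta}}{s}}\cdot\left(1-\frac{s}{n}\right). \]
   Context: For $s\in\{0,\dots,n\}$, the algorithm $C_s$ on input $(x_1,\dots,x_n)\in\{0,1\}^n$ chooses $H$ uniformly at random among subsets of $[n]$ of size $s$, draws $B\sim\mathrm{Bin}(s,1/2)$ independently, and outputs $\sum_{i\notin H}x_i+B$. An algorithm $M$ on $\{0,1\}^n$ is $(\varepsilon,\delta)$-differentially private if for all $X,X'$ differing in one coordinate and every set $W$ of outputs, $\Pr[M(X)\in W]\le e^{\varepsilon}\Pr[M(X')\in W]+\delta$. $\log$ is the natural logarithm. *)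

theory Defs
  imports "HOL-Probability.Probability"
begin

text \<open>Inputs \<open>X \<in> {0,1}^n\<close> are boolean lists of length n (True = 1).\<close>

definition C_alg :: "nat \<Rightarrow> nat \<Rightarrow> bool list \<Rightarrow> nat pmf" where
  "C_alg n s X =
     do { H \<leftarrow> pmf_of_set {H. H \<subseteq> {..<n} \<and> card H = s};
          B \<leftarrow> binomial_pmf s (1/2);
          return_pmf ((\<Sum>i\<in>{..<n} - H. of_bool (X ! i)) + B) }"

definition neighbouring :: "nat \<Rightarrow> bool list \<Rightarrow> bool list \<Rightarrow> bool" where
  "neighbouring n X X' \<longleftrightarrow> length X = n \<and> length X' = n \<and>
     (\<exists>i<n. \<forall>j<n. j \<noteq> i \<longrightarrow> X ! j = X' ! j)"

definition diff_private :: "nat \<Rightarrow> (bool list \<Rightarrow> 'b pmf) \<Rightarrow> real \<Rightarrow> real \<Rightarrow> bool" where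
  "diff_private n M \<epsilon> \<delta> \<longleftrightarrow>
     (\<forall>X X' W. neighbouring n X X' \<longrightarrow>
        measure_pmf.prob (M X) W \<le> exp \<epsilon> * measure_pmf.prob (M X') W + \<delta>)"

end

(*
  Let X, X' differ only in coordinate i. Grouping the hidden sets H = G \<union> {i} and H = G \<union> {J}
  (G an (s-1)-subset avoiding i, J outside G \<union> {i}) writes the law of C_s(X) as an average of
  mixtures (s/n) (A + x_J + B) + (1 - s/n) (A + x_i + B), in which only the component of weight
  q = 1 - s/n depends on x_i. Off the tails of B ~ Bin(s, 1/2), which Hoeffding's inequality
  bounds by delta/2, the probabilities of B and B + 1 differ by a factor at most 1 + e with
  e = sqrt (32 log (4/delta) / s); replacing a component of weight q of such a mixture therefore
  changes probabilities by a factor at most exp (q e), up to an additive delta/2.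
*)
theory Submission
  imports Defs
begin

abbreviation Bin :: "nat \<Rightarrow> nat pmf" where "Bin s \<equiv> binomial_pmf s (1/2)"

lemma Suc_mult_choose_Suc:
  "real (Suc k) * real (s choose Suc k) = real (s - k) * real (s choose k)"
  by (metis binomial_absorption binomial_absorb_comp of_nat_mult)

lemma choose_Suc_le_choose:
  fixes e :: real
  assumes "0 \<le> e" and "real s + 1 \<le> (2 + e) * (real k + 1)"
  shows "real (s choose Suc k) \<le> (1 + e) * real (s choose k)"
proof (cases "k < s")
  case True
  then have "real (s - k) \<le> (1 + e) * real (Suc k)"
    using assms(2) by (simp add: of_nat_diff algebra_simps)
  then have "real (Suc k) * real (s choose Suc k) \<le> (1 + e) * real (Suc k) * real (s choose k)"
    unfolding Suc_mult_choose_Suc by (rule mult_right_mono) simp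
  also have "\<dots> = real (Suc k) * ((1 + e) * real (s choose k))"
    by (simp only: mult_ac)
  finally show ?thesis
    by (simp only: mult_le_cancel_left_pos[OF of_nat_0_less_iff[THEN iffD2, OF zero_less_Suc]])
next
  case False
  then show ?thesis using assms(1) by (simp add: binomial_eq_0)
qed

lemma choose_le_choose_Suc:
  fixes e :: real
  assumes "0 \<le> e" and "(2 + e) * (real k + 1) \<le> (1 + e) * (real s + 1)"
  shows "real (s choose k) \<le> (1 + e) * real (s choose Suc k)"
proof -
  have "k < s"
  proof (rule ccontr)
    assume "\<not> k < s"
    then have "(2 + e) * (real s + 1) \<le> (2 + e) * (real k + 1)"
      using assms(1) by (intro mult_left_mono) auto
    then show False using assms(2) by (simp add: algebra_simps)
  qed
  then have "real (Suc k) \<le> (1 + e) * real (s - k)"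
    using assms(2) by (simp add: of_nat_diff algebra_simps)
  then have "real (Suc k) * real (s choose k) \<le> (1 + e) * real (s - k) * real (s choose k)"
    by (rule mult_right_mono) simp
  also have "\<dots> = (1 + e) * (real (Suc k) * real (s choose Suc k))"
    by (simp only: Suc_mult_choose_Suc mult.assoc)
  also have "\<dots> = real (Suc k) * ((1 + e) * real (s choose Suc k))"
    by (rule mult.left_commute)
  finally have "real (Suc k) * real (s choose k) \<le> real (Suc k) * ((1 + e) * real (s choose Suc k))" .
  then show ?thesis
    by (simp only: mult_le_cancel_left_pos[OF of_nat_0_less_iff[THEN iffD2, OF zero_less_Suc]])
qed

lemma pmf_Bin: "pmf (Bin s) k = real (s choose k) / 2 ^ s"
proof (cases "k \<le> s")
  case True
  have "(1/2::real) ^ k * (1 - 1/2) ^ (s - k) = (1/2) ^ (k + (s - k))"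
    by (simp add: power_add)
  also have "k + (s - k) = s" using True by simp
  finally show ?thesis by (simp add: pmf_binomial power_divide)
next
  case False
  then show ?thesis by (simp add: pmf_binomial binomial_eq_0)
qed

lemma pmf_map_Suc_Suc: "pmf (map_pmf Suc p) (Suc k) = pmf p k"
  by (simp add: pmf_map_inj' inj_def)

lemma pmf_map_Suc_0: "pmf (map_pmf Suc p) 0 = 0"
  by (auto intro: pmf_map_outside)

definition pmf_dominated :: "real \<Rightarrow> real \<Rightarrow> 'a pmf \<Rightarrow> 'a pmf \<Rightarrow> bool" where
  "pmf_dominated e d p p' \<longleftrightarrow>
     (\<exists>B. measure_pmf.prob p B \<le> d \<and> measure_pmf.prob p' B \<le> d \<and>
          (\<forall>x. x \<notin> B \<longrightarrow> pmf p x \<le> (1 + e) * pmf p' x))"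

lemma le_exp_mult_mix:
  fixes q e x w :: real
  assumes "0 \<le> q" "q \<le> 1" "0 \<le> e" "0 \<le> x" "x \<le> (1 + e) * w"
  shows "x \<le> exp (q * e) * ((1 - q) * x + q * w)"
proof -
  have "0 \<le> (1 + e) * w" using assms(4,5) by linarith
  then have "0 \<le> w" using assms(3) by (simp add: zero_le_mult_iff)
  define z where "z = q * e"
  have "0 \<le> z" "z \<le> e"
    using assms(1-3) by (auto simp: z_def mult_left_le_one_le)
  have "(1 + e - z) * x \<le> (1 + e) * ((1 - q) * x + q * w)"
  proof -
    have "q * x \<le> q * ((1 + e) * w)" using assms(5,1) by (rule mult_left_mono)
    then show ?thesis by (simp add: z_def algebra_simps)
  qed
  have "1 + e \<le> (1 + z) * (1 + e - z)"
  proof -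
    have "0 \<le> z * (e - z)" using \<open>0 \<le> z\<close> \<open>z \<le> e\<close> by simp
    then show ?thesis by (simp add: algebra_simps)
  qed
  then have "(1 + e) * x \<le> (1 + z) * (1 + e - z) * x"
    using assms(4) by (rule mult_right_mono)
  also have "\<dots> \<le> (1 + z) * ((1 + e) * ((1 - q) * x + q * w))"
    using \<open>(1 + e - z) * x \<le> _\<close> \<open>0 \<le> z\<close> by (simp add: mult.assoc mult_left_mono)
  also have "\<dots> \<le> exp z * ((1 + e) * ((1 - q) * x + q * w))"
    using assms \<open>0 \<le> w\<close> by (intro mult_right_mono exp_ge_add_one_self) auto
  finally have "(1 + e) * x \<le> (1 + e) * (exp z * ((1 - q) * x + q * w))"
    by (simp only: mult_ac)
  then show ?thesis
    using assms(3) by (simp add: z_def mult_le_cancel_left_pos)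
qed

lemma mix_le_exp_mult:
  fixes q e x w :: real
  assumes "0 \<le> q" "0 \<le> w" "x \<le> (1 + e) * w"
  shows "(1 - q) * w + q * x \<le> exp (q * e) * w"
proof -
  have "(1 - q) * w + q * x \<le> (1 - q) * w + q * ((1 + e) * w)"
    using assms(1,3) by (simp add: mult_left_mono)
  also have "\<dots> = (1 + q * e) * w" by (simp add: algebra_simps)
  also have "\<dots> \<le> exp (q * e) * w"
    using assms(2) by (intro mult_right_mono exp_ge_add_one_self)
  finally show ?thesis .
qed

lemma measure_pmf_lincomb_mono:
  fixes a b c c' :: real
  assumes "\<And>x. x \<in> A \<Longrightarrow> a * pmf p x + b * pmf p' x \<le> c * pmf r x + c' * pmf r' x"
  shows "a * measure_pmf.prob p A + b * measure_pmf.prob p' A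
           \<le> c * measure_pmf.prob r A + c' * measure_pmf.prob r' A"
proof -
  have lincomb: "u * measure_pmf.prob M A + v * measure_pmf.prob M' A
                   = infsetsum (\<lambda>x. u * pmf M x + v * pmf M' x) A" for u v :: real and M M'
    by (subst infsetsum_add)
       (auto simp: measure_pmf_conv_infsetsum infsetsum_cmult_right[OF pmf_abs_summable]
             intro: abs_summable_on_cmult_right)
  show ?thesis
    unfolding lincomb
    by (intro infsetsum_mono abs_summable_on_add abs_summable_on_cmult_right pmf_abs_summable assms)
qed

lemma prob_le_exp_mix:
  assumes "pmf_dominated e d p p'" and "0 \<le> q" "q \<le> 1" "0 \<le> e"
  shows "measure_pmf.prob p W
           \<le> exp (q * e) * ((1 - q) * measure_pmf.prob p W + q * measure_pmf.prob p' W) + d"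
proof -
  obtain B where "measure_pmf.prob p B \<le> d"
    and ratio: "\<And>x. x \<notin> B \<Longrightarrow> pmf p x \<le> (1 + e) * pmf p' x"
    using assms(1) unfolding pmf_dominated_def by blast
  define E where "E = exp (q * e)"
  have "1 * measure_pmf.prob p (W - B) + 0 * measure_pmf.prob p (W - B)
          \<le> (E * (1 - q)) * measure_pmf.prob p (W - B) + (E * q) * measure_pmf.prob p' (W - B)"
  proof (rule measure_pmf_lincomb_mono)
    fix x assume "x \<in> W - B"
    then have "pmf p x \<le> E * ((1 - q) * pmf p x + q * pmf p' x)"
      unfolding E_def using assms(2-4) ratio by (intro le_exp_mult_mix) auto
    then show "1 * pmf p x + 0 * pmf p x \<le> E * (1 - q) * pmf p x + E * q * pmf p' x"
      by (simp add: algebra_simps)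
  qed
  also have "\<dots> \<le> E * ((1 - q) * measure_pmf.prob p W + q * measure_pmf.prob p' W)"
    unfolding mult.assoc distrib_left[symmetric] using assms(2,3)
    by (intro mult_left_mono add_mono measure_pmf.finite_measure_mono) (auto simp: E_def)
  moreover have "measure_pmf.prob p (W \<inter> B) \<le> d"
    using \<open>measure_pmf.prob p B \<le> d\<close> measure_pmf.finite_measure_mono[of "W \<inter> B" B p] by simp
  ultimately show ?thesis
    using measure_pmf.finite_measure_Diff'[where M=p and A=W and B=B] by (simp add: E_def)
qed

lemma mix_prob_le_exp:
  assumes "pmf_dominated e d p p'" and "0 \<le> q" "q \<le> 1"
  shows "(1 - q) * measure_pmf.prob p' W + q * measure_pmf.prob p W
           \<le> exp (q * e) * measure_pmf.prob p' W + d"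
proof -
  obtain B where "measure_pmf.prob p B \<le> d" "measure_pmf.prob p' B \<le> d"
    and ratio: "\<And>x. x \<notin> B \<Longrightarrow> pmf p x \<le> (1 + e) * pmf p' x"
    using assms(1) unfolding pmf_dominated_def by blast
  have "(1 - q) * measure_pmf.prob p' W + q * measure_pmf.prob p W
          = ((1 - q) * measure_pmf.prob p' (W - B) + q * measure_pmf.prob p (W - B))
            + ((1 - q) * measure_pmf.prob p' (W \<inter> B) + q * measure_pmf.prob p (W \<inter> B))"
  proof -
    have "measure_pmf.prob M W = measure_pmf.prob M (W - B) + measure_pmf.prob M (W \<inter> B)"
      for M :: "'a pmf"
      by (simp add: measure_pmf.finite_measure_Diff')
    then show ?thesis by (simp add: algebra_simps)
  qed
  also have "\<dots> \<le> exp (q * e) * measure_pmf.prob p' W + ((1 - q) * d + q * d)"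
  proof (rule add_mono)
    have "(1 - q) * measure_pmf.prob p' (W - B) + q * measure_pmf.prob p (W - B)
            \<le> exp (q * e) * measure_pmf.prob p' (W - B) + 0 * measure_pmf.prob p' (W - B)"
      using assms(2) ratio by (intro measure_pmf_lincomb_mono) (simp add: mix_le_exp_mult)
    also have "\<dots> \<le> exp (q * e) * measure_pmf.prob p' W"
      by (simp add: measure_pmf.finite_measure_mono)
    finally show "(1 - q) * measure_pmf.prob p' (W - B) + q * measure_pmf.prob p (W - B)
                    \<le> exp (q * e) * measure_pmf.prob p' W" .
    show "(1 - q) * measure_pmf.prob p' (W \<inter> B) + q * measure_pmf.prob p (W \<inter> B)
            \<le> (1 - q) * d + q * d"
      using assms(2,3) \<open>measure_pmf.prob p B \<le> d\<close> \<open>measure_pmf.prob p' B \<le> d\<close>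
        measure_pmf.finite_measure_mono[of "W \<inter> B" B p]
        measure_pmf.finite_measure_mono[of "W \<inter> B" B p']
      by (intro add_mono mult_left_mono) auto
  qed
  finally show ?thesis by (simp add: algebra_simps)
qed

lemma prob_mix_le_exp_pair:
  assumes "pmf_dominated e d p0 p1" "pmf_dominated e d p1 p0" and "0 \<le> q" "q \<le> 1" "0 \<le> e"
    and "r \<in> {p0, p1}" "p \<in> {p0, p1}" "p' \<in> {p0, p1}"
  shows "(1 - q) * measure_pmf.prob r W + q * measure_pmf.prob p W
           \<le> exp (q * e) * ((1 - q) * measure_pmf.prob r W + q * measure_pmf.prob p' W) + d"
proof (cases "p = p'")
  case True
  have "0 \<le> d"
    using assms(1) unfolding pmf_dominated_def by (meson measure_nonneg order_trans)
  have "(1 - q) * measure_pmf.prob r W + q * measure_pmf.prob p' W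
          \<le> exp (q * e) * ((1 - q) * measure_pmf.prob r W + q * measure_pmf.prob p' W)"
    using assms(3,4) mult_right_mono[of 1 "exp (q * e)"] by (simp add: assms(5))
  then show ?thesis unfolding True using \<open>0 \<le> d\<close> by linarith
next
  case False
  with assms(7,8) have "p = p0 \<and> p' = p1 \<or> p = p1 \<and> p' = p0" by auto
  then obtain a b where dom: "pmf_dominated e d a b" and "p = a" "p' = b" "r \<in> {a, b}"
    using assms(1,2,6) by auto
  then consider "r = a" | "r = b" by blast
  then show ?thesis
  proof cases
    case 1
    then show ?thesis using prob_le_exp_mix[OF dom assms(3-5), of W] \<open>p = a\<close> \<open>p' = b\<close>
      by (simp add: algebra_simps)
  next
    case 2
    then show ?thesis using mix_prob_le_exp[OF dom assms(3,4), of W] \<open>p = a\<close> \<open>p' = b\<close>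
      by (simp add: algebra_simps)
  qed
qed

lemma pmf_dominated_Bin_Suc:
  fixes e d :: real
  assumes "0 \<le> e" and "measure_pmf.prob (Bin s) {k. real k < (real s + 1) / (2 + e)} \<le> d"
  shows "pmf_dominated e d (Bin s) (map_pmf Suc (Bin s))"
  unfolding pmf_dominated_def
proof (intro exI conjI allI impI)
  let ?B = "{k. real k < (real s + 1) / (2 + e)}"
  show "measure_pmf.prob (Bin s) ?B \<le> d" by (rule assms(2))
  have "measure_pmf.prob (map_pmf Suc (Bin s)) ?B \<le> measure_pmf.prob (Bin s) ?B"
    by (auto intro!: measure_pmf.finite_measure_mono)
  then show "measure_pmf.prob (map_pmf Suc (Bin s)) ?B \<le> d" using assms(2) by linarith
  fix m assume "m \<notin> ?B"
  then have "(real s + 1) / (2 + e) \<le> real m" by simp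
  then have bound: "real s + 1 \<le> (2 + e) * real m"
    using assms(1) by (subst (asm) pos_divide_le_eq) (auto simp: mult.commute)
  then obtain k where m: "m = Suc k" by (cases m) auto
  have "real (s choose Suc k) / 2 ^ s \<le> (1 + e) * real (s choose k) / 2 ^ s"
    using bound choose_Suc_le_choose[OF assms(1), of s k]
    by (intro divide_right_mono) (auto simp: m add.commute)
  then show "pmf (Bin s) m \<le> (1 + e) * pmf (map_pmf Suc (Bin s)) m"
    by (simp add: m pmf_Bin pmf_map_Suc_Suc)
qed

lemma pmf_dominated_Suc_Bin:
  fixes e d :: real
  assumes "0 \<le> e"
    and "measure_pmf.prob (Bin s) {k. (1 + e) * (real s + 1) / (2 + e) < real k + 1} \<le> d"
  shows "pmf_dominated e d (map_pmf Suc (Bin s)) (Bin s)"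
  unfolding pmf_dominated_def
proof (intro exI conjI allI impI)
  let ?B = "{k. (1 + e) * (real s + 1) / (2 + e) < real k}"
  have "Suc -` ?B = {k. (1 + e) * (real s + 1) / (2 + e) < real k + 1}" by auto
  then show "measure_pmf.prob (map_pmf Suc (Bin s)) ?B \<le> d" using assms(2) by simp
  have "measure_pmf.prob (Bin s) ?B \<le> measure_pmf.prob (Bin s) (Suc -` ?B)"
    by (auto intro!: measure_pmf.finite_measure_mono)
  then show "measure_pmf.prob (Bin s) ?B \<le> d"
    using \<open>Suc -` ?B = _\<close> assms(2) by simp
  fix m assume "m \<notin> ?B"
  then have "real m \<le> (1 + e) * (real s + 1) / (2 + e)" by simp
  then have bound: "(2 + e) * real m \<le> (1 + e) * (real s + 1)"
    using assms(1) by (subst (asm) pos_le_divide_eq) (auto simp: mult.commute)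
  show "pmf (map_pmf Suc (Bin s)) m \<le> (1 + e) * pmf (Bin s) m"
  proof (cases m)
    case 0
    then show ?thesis using assms(1) pmf_map_Suc_0 by simp
  next
    case (Suc k)
    have "real (s choose k) / 2 ^ s \<le> (1 + e) * real (s choose Suc k) / 2 ^ s"
      using bound choose_le_choose_Suc[OF assms(1), of k s]
      by (intro divide_right_mono) (auto simp: Suc add.commute)
    then show ?thesis by (simp add: Suc pmf_Bin pmf_map_Suc_Suc)
  qed
qed

lemma privacy_parameter_bounds:
  fixes \<delta> e :: real
  assumes "0 < \<delta>" "\<delta> \<le> 2" "8 * ln (4 / \<delta>) < real s"
    and e: "e = sqrt (32 * ln (4 / \<delta>) / real s)"
  shows "0 < real s" and "0 \<le> e" and "e < 2" and "2 \<le> e * real s"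
    and "(e * real s)\<^sup>2 = 32 * ln (4 / \<delta>) * real s"
proof -
  define L where "L = ln (4 / \<delta>)"
  have "ln 2 \<le> L"
    unfolding L_def using assms(1,2) by (subst ln_le_cancel_iff) (auto simp: field_simps)
  moreover have "2 / 3 \<le> ln (2 :: real)" by (rule ln2_ge_two_thirds)
  ultimately have "0 < L" by linarith
  have s: "8 * L < real s" using assms(3) by (simp add: L_def)
  with \<open>0 < L\<close> show "0 < real s" by linarith
  have e2: "e\<^sup>2 = 32 * L / real s"
    using \<open>0 < L\<close> \<open>0 < real s\<close> by (simp add: e L_def)
  show "0 \<le> e"
    using \<open>0 < L\<close> \<open>0 < real s\<close> by (simp add: e L_def)
  have "32 * L / real s < 4" using s \<open>0 < real s\<close> by (simp add: pos_divide_less_eq)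
  then have "e\<^sup>2 < 2\<^sup>2" using e2 by simp
  then show "e < 2" by (rule power_less_imp_less_base) simp
  have "(2 / 3) * (8 * (2 / 3)) \<le> L * (8 * L)"
    using \<open>2 / 3 \<le> ln 2\<close> \<open>ln 2 \<le> L\<close> by (intro mult_mono) auto
  also have "\<dots> \<le> L * real s" using s \<open>0 < L\<close> by simp
  finally have "1 / 8 \<le> L * real s" by simp
  have "(e * real s)\<^sup>2 = 32 * L * real s"
    using e2 \<open>0 < real s\<close> by (simp add: power_mult_distrib power2_eq_square field_simps)
  then show "(e * real s)\<^sup>2 = 32 * ln (4 / \<delta>) * real s" by (simp add: L_def)
  have "2\<^sup>2 \<le> (e * real s)\<^sup>2"
    using \<open>(e * real s)\<^sup>2 = 32 * L * real s\<close> \<open>1 / 8 \<le> L * real s\<close> by simp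
  then show "2 \<le> e * real s"
    by (rule power2_le_imp_le) (use \<open>0 \<le> e\<close> in simp)
qed

lemma hoeffding_exponent_le:
  fixes \<delta> e :: real
  assumes "0 < \<delta>" "\<delta> \<le> 2" "8 * ln (4 / \<delta>) < real s"
    and e: "e = sqrt (32 * ln (4 / \<delta>) / real s)"
  defines "t \<equiv> (e * real s - 2) / (2 * (2 + e))"
  shows "0 \<le> t" and "exp (- 2 * t\<^sup>2 / real s) \<le> \<delta> / 2"
proof -
  note bounds = privacy_parameter_bounds[OF assms(1-4)]
  have t8: "(e * real s - 2) / 8 \<le> t"
    unfolding t_def using bounds(2-4) by (intro divide_left_mono) auto
  moreover have "0 \<le> (e * real s - 2) / 8" using bounds(4) by simp
  ultimately show "0 \<le> t" by linarith
  have "0 \<le> 1 / (8 * real s)" by simp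
  moreover have "2 / 3 \<le> ln (2 :: real)" by (rule ln2_ge_two_thirds)
  ultimately have "ln (4 / \<delta>) - ln 2 \<le> ln (4 / \<delta>) - e / 8 + 1 / (8 * real s)"
    using bounds(3) by linarith
  also have "\<dots> = ((e * real s)\<^sup>2 - 4 * (e * real s) + 4) / (32 * real s)"
    unfolding bounds(5) using bounds(1) by (simp add: field_simps)
  also have "\<dots> = 2 * ((e * real s - 2) / 8)\<^sup>2 / real s"
    using bounds(1) by (simp add: power2_eq_square field_simps)
  also have "\<dots> \<le> 2 * t\<^sup>2 / real s"
    using t8 bounds(1,4) by (intro divide_right_mono mult_left_mono power_mono) auto
  finally have "exp (- 2 * t\<^sup>2 / real s) \<le> exp (ln 2 - ln (4 / \<delta>))" by simp
  also have "\<dots> = \<delta> / 2"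
    using assms(1) by (simp add: exp_diff)
  finally show "exp (- 2 * t\<^sup>2 / real s) \<le> \<delta> / 2" .
qed

lemma Bin_tails:
  fixes \<delta> e :: real
  assumes "0 < \<delta>" "\<delta> \<le> 2" "8 * ln (4 / \<delta>) < real s"
    and e: "e = sqrt (32 * ln (4 / \<delta>) / real s)"
  shows "measure_pmf.prob (Bin s) {k. real k < (real s + 1) / (2 + e)} \<le> \<delta> / 2"
    and "measure_pmf.prob (Bin s) {k. (1 + e) * (real s + 1) / (2 + e) < real k + 1} \<le> \<delta> / 2"
proof -
  define t where "t = (e * real s - 2) / (2 * (2 + e))"
  note bounds = privacy_parameter_bounds[OF assms]
  note exponent = hoeffding_exponent_le[OF assms, folded t_def]
  have "0 < s" using bounds(1) by simp
  have fair: "binomial_distribution (1 / 2)" by unfold_locales auto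
  have "(real s + 1) / (2 + e) = real s * (1 / 2) - t"
    unfolding t_def using bounds(2) by (simp add: field_simps)
  then have "measure_pmf.prob (Bin s) {k. real k < (real s + 1) / (2 + e)}
               \<le> measure_pmf.prob (Bin s) {k. real k \<le> real s * (1 / 2) - t}"
    by (intro measure_pmf.finite_measure_mono) auto
  also have "\<dots> \<le> exp (- 2 * t\<^sup>2 / real s)"
    by (rule binomial_distribution.prob_le[OF fair \<open>0 < s\<close> exponent(1)])
  finally show "measure_pmf.prob (Bin s) {k. real k < (real s + 1) / (2 + e)} \<le> \<delta> / 2"
    using exponent(2) by linarith
  have "(1 + e) * (real s + 1) / (2 + e) - 1 = real s * (1 / 2) + t"
    unfolding t_def using bounds(2) by (simp add: field_simps)
  then have "measure_pmf.prob (Bin s) {k. (1 + e) * (real s + 1) / (2 + e) < real k + 1}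
               \<le> measure_pmf.prob (Bin s) {k. real s * (1 / 2) + t \<le> real k}"
    by (intro measure_pmf.finite_measure_mono) auto
  also have "\<dots> \<le> exp (- 2 * t\<^sup>2 / real s)"
    by (rule binomial_distribution.prob_ge[OF fair \<open>0 < s\<close> exponent(1)])
  finally show "measure_pmf.prob (Bin s) {k. (1 + e) * (real s + 1) / (2 + e) < real k + 1} \<le> \<delta> / 2"
    using exponent(2) by linarith
qed

lemma finite_card_subsets: "finite I \<Longrightarrow> finite {H. H \<subseteq> I \<and> card H = s}"
  by (rule finite_subset[of _ "Pow I"]) auto

lemma card_subsets_nonempty:
  "finite I \<Longrightarrow> s \<le> card I \<Longrightarrow> {H. H \<subseteq> I \<and> card H = s} \<noteq> {}"
  by (metis (mono_tags, lifting) empty_Collect_eq obtain_subset_with_card_n)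

lemma sum_pairs_insert:
  fixes \<phi> :: "'a set \<Rightarrow> real"
  assumes "finite R" "0 < s"
  shows "(\<Sum>(G, J)\<in>Sigma {G. G \<subseteq> R \<and> card G = s - 1} (\<lambda>G. R - G). \<phi> (insert J G))
           = real s * sum \<phi> {H. H \<subseteq> R \<and> card H = s}"
proof -
  let ?S' = "{G. G \<subseteq> R \<and> card G = s - 1}" and ?S = "{H. H \<subseteq> R \<and> card H = s}"
  have fin: "finite H" if "H \<subseteq> R" for H using assms(1) that by (rule finite_subset[rotated])
  have "bij_betw (\<lambda>(G, J). (insert J G, J)) (Sigma ?S' (\<lambda>G. R - G)) (Sigma ?S (\<lambda>H. H))"
  proof (rule bij_betwI[where g = "\<lambda>(H, J). (H - {J}, J)"])
    show "(\<lambda>(G, J). (insert J G, J)) \<in> Sigma ?S' (\<lambda>G. R - G) \<rightarrow> Sigma ?S (\<lambda>H. H)"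
      using assms(2) by (auto simp: fin)
    show "(\<lambda>(H, J). (H - {J}, J)) \<in> Sigma ?S (\<lambda>H. H) \<rightarrow> Sigma ?S' (\<lambda>G. R - G)"
      by (auto simp: fin)
  qed auto
  then have "(\<Sum>(G, J)\<in>Sigma ?S' (\<lambda>G. R - G). \<phi> (insert J G))
               = (\<Sum>(H, J)\<in>Sigma ?S (\<lambda>H. H). \<phi> H)"
    by (subst sum.reindex_bij_betw[symmetric]) (auto simp: case_prod_beta)
  also have "\<dots> = (\<Sum>H\<in>?S. \<Sum>J\<in>H. \<phi> H)"
    using assms(1) by (subst sum.Sigma) (auto simp: fin finite_card_subsets)
  also have "\<dots> = real s * sum \<phi> ?S"
    by (simp add: sum_distrib_left)
  finally show ?thesis .
qed

(* An s-subset containing i is G \<union> {i} for the card I - s choices of J, one avoiding i is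
   G \<union> {J} for its s elements J. *)
lemma sum_card_subsets_pairs:
  fixes f :: "'a set \<Rightarrow> real"
  assumes "finite I" "i \<in> I" "0 < s" "s < card I"
  shows "sum f {H. H \<subseteq> I \<and> card H = s}
           = (\<Sum>(G, J)\<in>Sigma {G. G \<subseteq> I - {i} \<and> card G = s - 1} (\<lambda>G. I - {i} - G).
                f (insert i G) / real (card I - s) + f (insert J G) / real s)"
proof -
  define R where "R = I - {i}"
  let ?S' = "{G. G \<subseteq> R \<and> card G = s - 1}" and ?S = "{H. H \<subseteq> R \<and> card H = s}"
  have "finite R" using assms(1) by (simp add: R_def)
  have card_R: "card R = card I - 1" using assms(1,2) by (simp add: R_def)
  have fin: "finite H" if "H \<subseteq> R" for H using \<open>finite R\<close> that by (rule finite_subset[rotated])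
  have "i \<notin> R" "R \<subseteq> I" by (auto simp: R_def)
  have card_insert: "card (insert i G) = s" if "G \<subseteq> R" "card G = s - 1" for G
    using that fin[OF that(1)] \<open>i \<notin> R\<close> assms(3) by (subst card.insert) auto
  have split: "{H. H \<subseteq> I \<and> card H = s} = insert i ` ?S' \<union> ?S"
  proof (intro equalityI subsetI)
    fix H assume H: "H \<in> {H. H \<subseteq> I \<and> card H = s}"
    show "H \<in> insert i ` ?S' \<union> ?S"
    proof (cases "i \<in> H")
      case True
      then have "H = insert i (H - {i})" "H - {i} \<in> ?S'"
        using H assms(1) by (auto simp: R_def finite_subset)
      then show ?thesis by blast
    qed (use H in \<open>auto simp: R_def\<close>)
  qed (use assms(2) \<open>R \<subseteq> I\<close> card_insert in auto)
  have "sum f {H. H \<subseteq> I \<and> card H = s} = sum f (insert i ` ?S') + sum f ?S"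
    unfolding split
    by (rule sum.union_disjoint)
       (use \<open>finite R\<close> \<open>i \<notin> R\<close> in \<open>auto simp: finite_card_subsets\<close>)
  also have "sum f (insert i ` ?S') = sum (\<lambda>G. f (insert i G)) ?S'"
    by (rule sum.reindex[unfolded comp_def]) (auto simp: R_def inj_on_def)
  also have "\<dots> = (\<Sum>(G, J)\<in>Sigma ?S' (\<lambda>G. R - G). f (insert i G) / real (card I - s))"
  proof -
    have "card (R - G) = card I - s" if "G \<in> ?S'" for G
      using that assms(3) card_R by (simp add: card_Diff_subset fin)
    then show ?thesis
      using assms(4) \<open>finite R\<close>
      by (subst sum.Sigma[symmetric]) (auto simp: finite_card_subsets intro!: sum.cong)
  qed
  also have "sum f ?S = (\<Sum>(G, J)\<in>Sigma ?S' (\<lambda>G. R - G). f (insert J G) / real s)"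
    using sum_pairs_insert[OF \<open>finite R\<close> assms(3), of "\<lambda>H. f H / real s"] assms(3)
    by (simp add: sum_distrib_left)
  finally show ?thesis
    by (simp add: R_def sum.distrib case_prod_beta)
qed

lemma sum_card_subsets_le_pairs:
  fixes f h :: "'a set \<Rightarrow> real" and q :: real
  assumes "finite I" "i \<in> I" "0 < s" "s < card I" and q: "q = 1 - real s / real (card I)"
    and pairs: "\<And>G J. G \<subseteq> I - {i} \<Longrightarrow> J \<in> I - {i} - G \<Longrightarrow>
                  (1 - q) * f (insert i G) + q * f (insert J G)
                    \<le> (1 - q) * h (insert i G) + q * h (insert J G)"
  shows "sum f {H. H \<subseteq> I \<and> card H = s} \<le> sum h {H. H \<subseteq> I \<and> card H = s}"
proof -
  define N where "N = real (card I)"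
  have "real s < N" using assms(4) by (simp add: N_def)
  have weights: "x / real (card I - s) + y / real s
                   = N / (real s * (N - real s)) * ((1 - q) * x + q * y)" for x y
    using assms(3,4) \<open>real s < N\<close> by (simp add: q N_def of_nat_diff field_simps)
  have pair_term: "0 \<le> (h (insert i G) - f (insert i G)) / real (card I - s)
                          + (h (insert J G) - f (insert J G)) / real s"
    if "G \<subseteq> I - {i}" "J \<in> I - {i} - G" for G J
  proof -
    have "0 \<le> N / (real s * (N - real s))" using \<open>real s < N\<close> by simp
    moreover have "0 \<le> (1 - q) * (h (insert i G) - f (insert i G))
                        + q * (h (insert J G) - f (insert J G))"
      using pairs[OF that] by (simp add: algebra_simps)
    ultimately show ?thesis unfolding weights by (rule mult_nonneg_nonneg)
  qed
  have "0 \<le> sum (\<lambda>H. h H - f H) {H. H \<subseteq> I \<and> card H = s}"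
    unfolding sum_card_subsets_pairs[OF assms(1-4)] by (auto intro!: sum_nonneg pair_term)
  then show ?thesis by (simp add: sum_subtractf)
qed

definition visible_count :: "nat \<Rightarrow> bool list \<Rightarrow> nat set \<Rightarrow> nat" where
  "visible_count n X H = (\<Sum>i\<in>{..<n} - H. of_bool (X ! i))"

lemma visible_count_insert:
  assumes "j < n" "j \<notin> H"
  shows "visible_count n X H = visible_count n X (insert j H) + of_bool (X ! j)"
proof -
  have "{..<n} - H = insert j ({..<n} - insert j H)" using assms by auto
  moreover have "j \<notin> {..<n} - insert j H" by simp
  ultimately show ?thesis
    unfolding visible_count_def by (metis add.commute finite_Diff finite_lessThan sum.insert)
qed

lemma visible_count_cong:
  assumes "\<And>j. j < n \<Longrightarrow> j \<notin> H \<Longrightarrow> X ! j = X' ! j"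
  shows "visible_count n X H = visible_count n X' H"
  unfolding visible_count_def using assms by (intro sum.cong) auto

lemma C_alg_eq_bind:
  "C_alg n s X = pmf_of_set {H. H \<subseteq> {..<n} \<and> card H = s} \<bind>
                   (\<lambda>H. map_pmf ((+) (visible_count n X H)) (Bin s))"
  unfolding C_alg_def visible_count_def map_pmf_def by simp

lemma prob_bind_pmf:
  "measure_pmf.prob (bind_pmf M f) A = (\<integral>x. measure_pmf.prob (f x) A \<partial>measure_pmf M)"
  unfolding measure_pmf_bind
  by (subst measure_pmf.measure_bind[where N="count_space UNIV"]) (auto simp: measure_subprob)

lemma prob_C_alg:
  assumes "s \<le> n"
  shows "measure_pmf.prob (C_alg n s X) W
           = (\<Sum>H\<in>{H. H \<subseteq> {..<n} \<and> card H = s}.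
                measure_pmf.prob (Bin s) {b. visible_count n X H + b \<in> W})
             / card {H. H \<subseteq> {..<n} \<and> card H = s}"
proof -
  let ?S = "{H. H \<subseteq> {..<n} \<and> card H = s}"
  have "?S \<noteq> {}" "finite ?S"
    using assms card_subsets_nonempty[of "{..<n}" s] finite_card_subsets[of "{..<n}" s] by auto
  have shift: "measure_pmf.prob (map_pmf ((+) c) (Bin s)) W
                  = measure_pmf.prob (Bin s) {b. c + b \<in> W}" for c
    by (simp only: measure_map_pmf vimage_def)
  show ?thesis
    unfolding C_alg_eq_bind prob_bind_pmf shift
      integral_pmf_of_set[OF \<open>?S \<noteq> {}\<close> \<open>finite ?S\<close>] ..
qed

lemma C_alg_all_hidden: "C_alg n n X = Bin n"
proof -
  have "H = {..<n}" if "H \<subseteq> {..<n}" "card H = n" for H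
    using that by (intro card_subset_eq) auto
  then have "{H. H \<subseteq> {..<n} \<and> card H = n} = {{..<n}}" by auto
  moreover have "(+) (0 :: nat) = (\<lambda>b. b)" by auto
  ultimately show ?thesis
    by (simp add: C_alg_eq_bind visible_count_def pmf_of_set_singleton bind_return_pmf pmf.map_ident)
qed

lemma prob_Bin_shift:
  "measure_pmf.prob (Bin s) {b. A + of_bool c + b \<in> W}
     = measure_pmf.prob (if c then map_pmf Suc (Bin s) else Bin s) {m. A + m \<in> W}"
  by (cases c) (simp_all add: vimage_def)

lemma C_alg_pair_bound:
  fixes e d q :: real and W :: "nat set"
  assumes dom: "pmf_dominated e d (Bin s) (map_pmf Suc (Bin s))"
                 "pmf_dominated e d (map_pmf Suc (Bin s)) (Bin s)"
    and "0 \<le> q" "q \<le> 1" "0 \<le> e"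
    and "i < n" and agree: "\<And>j. j < n \<Longrightarrow> j \<noteq> i \<Longrightarrow> X ! j = X' ! j"
    and G: "G \<subseteq> {..<n} - {i}" and J: "J \<in> {..<n} - {i} - G"
  defines "g Y H \<equiv> measure_pmf.prob (Bin s) {b. visible_count n Y H + b \<in> W}"
  shows "(1 - q) * g X (insert i G) + q * g X (insert J G)
           \<le> exp (q * e) * ((1 - q) * g X' (insert i G) + q * g X' (insert J G)) + d"
proof -
  (* Hiding G \<union> {i} reveals X ! J, hiding G \<union> {J} reveals X ! i; the rest A is shared. *)
  define A where "A = visible_count n X (insert i (insert J G))"
  define coin where "coin c = (if c then map_pmf Suc (Bin s) else Bin s)" for c
  have "J < n" "J \<noteq> i" "J \<notin> G" "i \<notin> G" using J G by auto
  have A': "visible_count n X' (insert i (insert J G)) = A"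
    unfolding A_def using agree by (intro visible_count_cong) (auto simp: eq_commute)
  have g: "g Y (insert i G) = measure_pmf.prob (coin (Y ! J)) {m. A + m \<in> W}"
          "g Y (insert J G) = measure_pmf.prob (coin (Y ! i)) {m. A + m \<in> W}"
    if "visible_count n Y (insert i (insert J G)) = A" for Y
  proof -
    have "visible_count n Y (insert i G) = A + of_bool (Y ! J)"
      using visible_count_insert[of J n "insert i G" Y] \<open>J < n\<close> \<open>J \<noteq> i\<close> \<open>J \<notin> G\<close> that
      by (simp add: insert_commute)
    moreover have "visible_count n Y (insert J G) = A + of_bool (Y ! i)"
      using visible_count_insert[of i n "insert J G" Y] \<open>i < n\<close> \<open>J \<noteq> i\<close> \<open>i \<notin> G\<close> that
      by simp
    ultimately show "g Y (insert i G) = measure_pmf.prob (coin (Y ! J)) {m. A + m \<in> W}"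
                    "g Y (insert J G) = measure_pmf.prob (coin (Y ! i)) {m. A + m \<in> W}"
      unfolding g_def coin_def by (simp_all only: prob_Bin_shift)
  qed
  have "X' ! J = X ! J" using agree \<open>J < n\<close> \<open>J \<noteq> i\<close> by simp
  have coin: "coin c \<in> {Bin s, map_pmf Suc (Bin s)}" for c by (simp add: coin_def)
  show ?thesis
    unfolding g[OF A_def[symmetric]] g[OF A'] \<open>X' ! J = X ! J\<close>
    by (rule prob_mix_le_exp_pair[OF dom assms(3-5) coin coin coin])
qed

lemma C_alg_neighbour_bound:
  fixes e d :: real
  assumes dom: "pmf_dominated e d (Bin s) (map_pmf Suc (Bin s))"
                 "pmf_dominated e d (map_pmf Suc (Bin s)) (Bin s)"
    and "0 \<le> e" "0 < s" "s < n" and "neighbouring n X X'"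
  shows "measure_pmf.prob (C_alg n s X) W
           \<le> exp (e * (1 - real s / real n)) * measure_pmf.prob (C_alg n s X') W + d"
proof -
  define q where "q = 1 - real s / real n"
  define g where "g Y H = measure_pmf.prob (Bin s) {b. visible_count n Y H + b \<in> W}" for Y H
  let ?S = "{H. H \<subseteq> {..<n} \<and> card H = s}"
  obtain i where "i < n" and agree: "\<And>j. j < n \<Longrightarrow> j \<noteq> i \<Longrightarrow> X ! j = X' ! j"
    using assms(6) unfolding neighbouring_def by blast
  have "0 \<le> q" "q \<le> 1" using assms(5) by (auto simp: q_def)
  have "sum (g X) ?S \<le> (\<Sum>H\<in>?S. exp (q * e) * g X' H + d)"
  proof (rule sum_card_subsets_le_pairs[where i = i and q = q])
    fix G J assume "G \<subseteq> {..<n} - {i}" "J \<in> {..<n} - {i} - G"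
    from C_alg_pair_bound[OF dom \<open>0 \<le> q\<close> \<open>q \<le> 1\<close> \<open>0 \<le> e\<close> \<open>i < n\<close> agree this, of W]
    show "(1 - q) * g X (insert i G) + q * g X (insert J G)
            \<le> (1 - q) * (exp (q * e) * g X' (insert i G) + d)
              + q * (exp (q * e) * g X' (insert J G) + d)"
      unfolding g_def by (simp add: algebra_simps)
  qed (use \<open>i < n\<close> assms(4,5) in \<open>simp_all add: q_def\<close>)
  also have "\<dots> = exp (q * e) * sum (g X') ?S + card ?S * d"
    by (simp add: sum.distrib sum_distrib_left)
  finally have "sum (g X) ?S / card ?S \<le> (exp (q * e) * sum (g X') ?S + card ?S * d) / card ?S"
    by (rule divide_right_mono) simp
  also have "\<dots> = exp (q * e) * (sum (g X') ?S / card ?S) + d"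
    using card_subsets_nonempty[of "{..<n}" s] finite_card_subsets[of "{..<n}" s] assms(5)
    by (simp add: field_simps card_gt_0_iff)
  finally show ?thesis
    using assms(5) by (simp add: prob_C_alg g_def q_def mult.commute)
qed


lemma diff_private_trivial:
  assumes "1 \<le> d"
  shows "diff_private n M e d"
  unfolding diff_private_def
proof (intro allI impI)
  fix X X' W
  have "measure_pmf.prob (M X) W \<le> 1" "0 \<le> exp e * measure_pmf.prob (M X') W" by simp_all
  then show "measure_pmf.prob (M X) W \<le> exp e * measure_pmf.prob (M X') W + d"
    using assms by linarith
qed

theorem claim4p5:
  fixes n s :: nat and \<delta> :: real
  assumes "\<delta> > 0" and "s \<le> n" and "real s > 8 * ln (4 / \<delta>)"
  shows "diff_private n (C_alg n s)
           (sqrt (32 * ln (4 / \<delta>) / real s) * (1 - real s / real n)) (\<delta> / 2)"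
proof (cases "\<delta> \<le> 2")
  case False
  then show ?thesis by (intro diff_private_trivial) simp
next
  case True
  define e where "e = sqrt (32 * ln (4 / \<delta>) / real s)"
  note parameters = privacy_parameter_bounds[OF assms(1) True assms(3) e_def]
  note tails = Bin_tails[OF assms(1) True assms(3) e_def]
  have "measure_pmf.prob (C_alg n s X) W
          \<le> exp (e * (1 - real s / real n)) * measure_pmf.prob (C_alg n s X') W + \<delta> / 2"
    if "neighbouring n X X'" for X X' W
  proof (cases "s = n")
    case True
    then have "C_alg n s X = C_alg n s X'" "1 - real s / real n = 0"
      using parameters(1) by (simp_all add: C_alg_all_hidden)
    then show ?thesis using assms(1) by simp
  next
    case False
    with assms(2) parameters(1) show ?thesis
      by (intro C_alg_neighbour_bound[OF pmf_dominated_Bin_Suc[OF parameters(2) tails(1)]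
            pmf_dominated_Suc_Bin[OF parameters(2) tails(2)] parameters(2)] that) simp_all
  qed
  then show ?thesis unfolding diff_private_def e_def by blast
qed

end
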